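(* Let $(X,f)$ be a dynamical system and let $S\subset X$ be a syndetically scrambled set for $f$ with $f(S)\subset S$ which contains a Cantor set $K$. Suppose that for every nonempty open $U\subset X$ there is $n\in\mathbb N$ with $f^n(K)\subset f^n(U)$. Then $f$ has a dense Mycielski set $T$ with $f(T)\subset T$ which is syndetically scrambled for $f$. Moreover, if $S$ is syndetically $\varepsilon$-scrambled, then so is $T$.
   Context: Dynamical system: compact metric space $X$ with metric $d$ and continuous $f$. Syndetic: subset of $\mathbb N$ meeting every set with arbitrarily long runs of consecutive integers. $\mathrm{Asy}(f)=\{(x,y):d(f^nx,f^ny)\to0\}$, $\mathrm{SProx}(f)=\{(x,y):\{n:d(f^nx,f^ny)<\eta\}$ syndetic for all $\eta>0\}$. A syndetically scrambled set has at least two points and all distinct pairs in $\mathrm{SProx}(f)\setminus\mathrm{Asy}(f)$; syndetically $\varepsilon$-scrambled if also $\limsup_n d(f^nx,f^ny)\ge\varepsilon$ for all distinct pairs. Cantor set: nonempty compact perfect totally disconnected; Mycielski set: countable union of Cantor sets. *)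

theory Defs
  imports "HOL-Analysis.Analysis"
begin

definition thick :: "nat set \<Rightarrow> bool" where
  "thick B \<longleftrightarrow> (\<forall>L. \<exists>m. {m..<m+L} \<subseteq> B)"

definition syndetic :: "nat set \<Rightarrow> bool" where
  "syndetic A \<longleftrightarrow> (\<forall>B. thick B \<longrightarrow> A \<inter> B \<noteq> {})"

definition Asy :: "('a::metric_space \<Rightarrow> 'a) \<Rightarrow> ('a \<times> 'a) set" where
  "Asy f = {(x, y). (\<lambda>n. dist ((f ^^ n) x) ((f ^^ n) y)) \<longlonglongrightarrow> 0}"

definition SProx :: "('a::metric_space \<Rightarrow> 'a) \<Rightarrow> ('a \<times> 'a) set" where
  "SProx f = {(x, y). \<forall>\<eta>>0. syndetic {n. dist ((f ^^ n) x) ((f ^^ n) y) < \<eta>}}"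

definition synd_scrambled :: "('a::metric_space \<Rightarrow> 'a) \<Rightarrow> 'a set \<Rightarrow> bool" where
  "synd_scrambled f S \<longleftrightarrow> (\<exists>x\<in>S. \<exists>y\<in>S. x \<noteq> y) \<and>
     (\<forall>x\<in>S. \<forall>y\<in>S. x \<noteq> y \<longrightarrow> (x, y) \<in> SProx f - Asy f)"

definition synd_eps_scrambled :: "('a::metric_space \<Rightarrow> 'a) \<Rightarrow> real \<Rightarrow> 'a set \<Rightarrow> bool" where
  "synd_eps_scrambled f \<epsilon> S \<longleftrightarrow> synd_scrambled f S \<and>
     (\<forall>x\<in>S. \<forall>y\<in>S. x \<noteq> y \<longrightarrow>
        limsup (\<lambda>n. ereal (dist ((f ^^ n) x) ((f ^^ n) y))) \<ge> ereal \<epsilon>)"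

definition totally_disconnected_set :: "'a::topological_space set \<Rightarrow> bool" where
  "totally_disconnected_set K \<longleftrightarrow> (\<forall>C\<subseteq>K. connected C \<longrightarrow> (\<exists>a. C \<subseteq> {a}))"

definition cantor_set :: "'a::metric_space set \<Rightarrow> bool" where
  "cantor_set K \<longleftrightarrow> K \<noteq> {} \<and> compact K \<and> (\<forall>x\<in>K. x islimpt K) \<and> totally_disconnected_set K"

definition mycielski_set :: "'a::metric_space set \<Rightarrow> bool" where
  "mycielski_set T \<longleftrightarrow> (\<exists>\<F>. countable \<F> \<and> (\<forall>C\<in>\<F>. cantor_set C) \<and> T = \<Union>\<F>)"

end

theory Submission
  imports Defs
begin

text \<open>
  The heart of the argument is a Mycielski-type fusion theorem: if \<open>F\<close> is
  compact, \<open>g\<close> is continuous on \<open>F\<close> and \<open>g(F)\<close> has no isolated points, then for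
  countably many relations \<open>R k\<close> that are nowhere dense in \<open>g(F) \<times> g(F)\<close> there are
  countably many disjoint Cantor sets in \<open>F\<close> on whose union \<open>g\<close> is injective and no two
  images are \<open>R k\<close>-related.  It is proved by building a binary tree of compact
  ``fat'' pieces (whose images have interior in \<open>g(F)\<close>), refining one level at a time,
  and taking the limit set of the tree, which is a Cantor set.

  For the theorem, fusion is used twice.  With \<open>g = id\<close> on \<open>K\<close> and the relations
  \<open>a = f\<^sup>k b\<close> and \<open>f\<^sup>k a = a\<close> it produces disjoint Cantor sets \<open>Ks i \<subseteq> K\<close> whose union
  meets every orbit at most once.  With \<open>g = f\<^sup>n\<close> it lifts \<open>f\<^sup>n(Ks i)\<close> to a Cantor set
  \<open>CC i\<close> inside the \<open>i\<close>-th ball of a countable base.  The required set is the union of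
  the orbits of all \<open>CC i\<close>: it is dense, invariant and Mycielski, and each pair of its
  points eventually follows the orbits of a pair of distinct points of \<open>S\<close>, which
  transfers syndetic scrambledness (and the bound on the upper limit) from \<open>S\<close>.
\<close>

lemma funpow_image_subset: "f ` X \<subseteq> X \<Longrightarrow> (f ^^ n) ` X \<subseteq> X"
  by (induction n) auto

lemma funpow_continuous_on:
  assumes "continuous_on X f" "f ` X \<subseteq> X"
  shows "continuous_on X (f ^^ n)"
proof (induction n)
  case 0 then show ?case by (simp add: continuous_on_id')
next
  case (Suc n)
  have "continuous_on ((f ^^ n) ` X) f"
    using continuous_on_subset[OF assms(1) funpow_image_subset[OF assms(2)]] .
  then show ?case using continuous_on_compose[OF Suc] by simp
qed

lemma funpow_eq_propagate:
  fixes f :: "'a \<Rightarrow> 'a"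
  assumes "(f ^^ N) x = (f ^^ N) y" "N \<le> n"
  shows "(f ^^ n) x = (f ^^ n) y"
proof -
  have "f ^^ n = f ^^ (n - N) \<circ> f ^^ N" using assms(2) by (simp add: funpow_add[symmetric])
  then show ?thesis using assms(1) by simp
qed

text \<open>Syndeticity only depends on the tail of a set, since a thick set stays thick
  after removing an initial segment.\<close>
lemma thick_tail: "thick B \<Longrightarrow> thick (B \<inter> {N..})"
  unfolding thick_def
proof
  fix L assume "\<forall>L. \<exists>m. {m..<m+L} \<subseteq> B"
  then obtain m where "{m..<m+(N+L)} \<subseteq> B" by blast
  then have "{m+N..<m+N+L} \<subseteq> B \<inter> {N..}" by auto
  then show "\<exists>m. {m..<m+L} \<subseteq> B \<inter> {N..}" by blast
qed

lemma syndetic_eventually_mono: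
  assumes "syndetic A" "\<And>n. n \<ge> N \<Longrightarrow> n \<in> A \<Longrightarrow> n \<in> A'"
  shows "syndetic A'"
  unfolding syndetic_def
proof (intro allI impI)
  fix B assume "thick B"
  then have "A \<inter> (B \<inter> {N..}) \<noteq> {}" using assms(1) thick_tail unfolding syndetic_def by blast
  then show "A' \<inter> B \<noteq> {}" using assms(2) by auto
qed

text \<open>This is how scrambledness passes from \<open>S\<close> to the new set.\<close>
lemma eventually_same_orbits:
  fixes f :: "'a::metric_space \<Rightarrow> 'a"
  assumes pq: "(p, q) \<in> SProx f - Asy f"
    and xp: "\<forall>n\<ge>N. (f ^^ n) x = (f ^^ n) p" and yq: "\<forall>n\<ge>N. (f ^^ n) y = (f ^^ n) q"
  shows "(x, y) \<in> SProx f - Asy f"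
    and "limsup (\<lambda>n. ereal (dist ((f ^^ n) x) ((f ^^ n) y)))
       = limsup (\<lambda>n. ereal (dist ((f ^^ n) p) ((f ^^ n) q)))"
proof -
  have eq: "n \<ge> N \<Longrightarrow> dist ((f ^^ n) x) ((f ^^ n) y) = dist ((f ^^ n) p) ((f ^^ n) q)" for n
    using xp yq by simp
  then have ev: "eventually (\<lambda>n. dist ((f ^^ n) x) ((f ^^ n) y) = dist ((f ^^ n) p) ((f ^^ n) q))
      sequentially"
    unfolding eventually_sequentially by blast
  have "(x, y) \<in> SProx f" unfolding SProx_def
  proof clarify
    fix \<eta> :: real assume "\<eta> > 0"
    then have "syndetic {n. dist ((f ^^ n) p) ((f ^^ n) q) < \<eta>}"
      using pq unfolding SProx_def by auto
    then show "syndetic {n. dist ((f ^^ n) x) ((f ^^ n) y) < \<eta>}"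
      by (rule syndetic_eventually_mono[where N = N]) (use eq in auto)
  qed
  moreover have "(x, y) \<notin> Asy f"
    using pq tendsto_cong[OF ev] unfolding Asy_def by auto
  ultimately show "(x, y) \<in> SProx f - Asy f" by blast
  show "limsup (\<lambda>n. ereal (dist ((f ^^ n) x) ((f ^^ n) y)))
      = limsup (\<lambda>n. ereal (dist ((f ^^ n) p) ((f ^^ n) q)))"
    by (rule Limsup_eq) (use ev in \<open>rule eventually_mono, simp\<close>)
qed

text \<open>Distinct points of a scrambled set are never asymptotic, so every iterate is
  injective on a scrambled set.\<close>
lemma scrambled_funpow_inj:
  fixes f :: "'a::metric_space \<Rightarrow> 'a"
  assumes "synd_scrambled f S" "x \<in> S" "y \<in> S" "(f ^^ n) x = (f ^^ n) y"
  shows "x = y"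
proof (rule ccontr)
  assume "x \<noteq> y"
  then have "(x, y) \<notin> Asy f" using assms unfolding synd_scrambled_def by blast
  moreover have "eventually (\<lambda>m. dist ((f ^^ m) x) ((f ^^ m) y) = 0) sequentially"
    unfolding eventually_sequentially using funpow_eq_propagate[OF assms(4)] by auto
  then have "(\<lambda>m. dist ((f ^^ m) x) ((f ^^ m) y)) \<longlonglongrightarrow> 0" by (rule tendsto_eventually)
  ultimately show False unfolding Asy_def by auto
qed

text \<open>Two distinct points of a common period stay at a fixed positive distance, so they
  cannot be syndetically proximal: a scrambled set contains at most one point of each
  period.\<close>
lemma scrambled_common_period_unique:
  fixes f :: "'a::metric_space \<Rightarrow> 'a"
  assumes sc: "synd_scrambled f S" and ab: "a \<in> S" "b \<in> S" and k: "k \<ge> 1"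
    and pa: "(f ^^ k) a = a" and pb: "(f ^^ k) b = b"
  shows "a = b"
proof (rule ccontr)
  assume ne: "a \<noteq> b"
  define D where "D = (\<lambda>i. dist ((f ^^ i) a) ((f ^^ i) b)) ` {..<k}"
  have D: "finite D" "D \<noteq> {}" using k by (auto simp: D_def lessThan_empty_iff)
  have D_pos: "d > 0" if "d \<in> D" for d
    using that ne scrambled_funpow_inj[OF sc ab] by (auto simp: D_def)
  define \<delta> where "\<delta> = Min D"
  have \<delta>: "\<delta> > 0" using D D_pos by (simp add: \<delta>_def)
  have far: "\<delta> \<le> dist ((f ^^ n) a) ((f ^^ n) b)" for n
  proof -
    have "dist ((f ^^ n) a) ((f ^^ n) b) = dist ((f ^^ (n mod k)) a) ((f ^^ (n mod k)) b)"
      using funpow_mod_eq[OF pa, of n] funpow_mod_eq[OF pb, of n] by simp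
    moreover have "dist ((f ^^ (n mod k)) a) ((f ^^ (n mod k)) b) \<in> D"
      using k by (auto simp: D_def)
    ultimately show ?thesis using D unfolding \<delta>_def by simp
  qed
  have "syndetic {n. dist ((f ^^ n) a) ((f ^^ n) b) < \<delta>}"
    using sc ab ne \<delta> unfolding synd_scrambled_def SProx_def by blast
  moreover have "{n. dist ((f ^^ n) a) ((f ^^ n) b) < \<delta>} = {}" using far by (auto simp: not_less)
  moreover have "thick UNIV" unfolding thick_def by auto
  ultimately show False unfolding syndetic_def by auto
qed

lemma cantor_set_two_points:
  assumes "cantor_set K" "open W" "W \<inter> K \<noteq> {}"
  obtains a1 a2 where "a1 \<in> W \<inter> K" "a2 \<in> W \<inter> K" "a1 \<noteq> a2"
proof -
  obtain a where a: "a \<in> W" "a \<in> K" using assms by auto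
  then have "a islimpt K" using assms(1) unfolding cantor_set_def by auto
  then obtain b where "b \<in> K" "b \<in> W" "b \<noteq> a" using a assms(2) by (meson islimptE)
  then show ?thesis using a that by blast
qed

lemma cantor_set_inj_image:
  assumes "cantor_set C" "continuous_on C h" "inj_on h C"
  shows "cantor_set (h ` C)"
  unfolding cantor_set_def
proof (intro conjI ballI)
  have cC: "compact C" "C \<noteq> {}" using assms(1) unfolding cantor_set_def by auto
  then show "h ` C \<noteq> {}" "compact (h ` C)" using compact_continuous_image[OF assms(2)] by auto
next
  fix y assume "y \<in> h ` C"
  then obtain a where a: "a \<in> C" "y = h a" by auto
  have a_limpt: "a islimpt C" using a assms(1) unfolding cantor_set_def by auto
  show "y islimpt h ` C" unfolding islimpt_approachable
  proof (intro allI impI)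
    fix e :: real assume "e > 0"
    then obtain d where d: "d > 0" "\<forall>x'\<in>C. dist x' a < d \<longrightarrow> dist (h x') (h a) < e"
      using assms(2) a unfolding continuous_on_iff by blast
    then obtain a' where "a' \<in> C" "a' \<noteq> a" "dist a' a < d"
      using a_limpt unfolding islimpt_approachable by blast
    moreover then have "h a' \<noteq> h a" using assms(3) a by (meson inj_onD)
    ultimately show "\<exists>x'\<in>h ` C. x' \<noteq> y \<and> dist x' y < e" using d a by blast
  qed
next
  have cC: "compact C" using assms(1) unfolding cantor_set_def by auto
  define h' where "h' = inv_into C h"
  have hinv: "\<forall>x\<in>C. h' (h x) = x" using assms(3) by (simp add: h'_def)
  have ch': "continuous_on (h ` C) h'" by (rule continuous_on_inv[OF assms(2) cC hinv])
  show "totally_disconnected_set (h ` C)" unfolding totally_disconnected_set_def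
  proof (intro allI impI)
    fix Z assume Z: "Z \<subseteq> h ` C" "connected Z"
    then have "connected (h' ` Z)" using ch' connected_continuous_image continuous_on_subset by blast
    moreover have "h' ` Z \<subseteq> C" using Z hinv by auto
    ultimately obtain a where "h' ` Z \<subseteq> {a}"
      using assms(1) unfolding cantor_set_def totally_disconnected_set_def by blast
    then have "h ` h' ` Z \<subseteq> {h a}" by auto
    moreover have "h ` h' ` Z = Z" using Z hinv by force
    ultimately show "\<exists>a. Z \<subseteq> {a}" by auto
  qed
qed

text \<open>These are the relations the fusion theorem below can avoid.\<close>
definition nowhere_dense_rel :: "'a::metric_space set \<Rightarrow> ('a \<times> 'a) set \<Rightarrow> bool" where
  "nowhere_dense_rel Y R \<longleftrightarrow> (\<forall>W W'. open W \<longrightarrow> open W' \<longrightarrow> W \<inter> Y \<noteq> {} \<longrightarrow> W' \<inter> Y \<noteq> {} \<longrightarrow>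
     (\<exists>V V'. open V \<and> open V' \<and> V \<subseteq> W \<and> V' \<subseteq> W' \<and> V \<inter> Y \<noteq> {} \<and> V' \<inter> Y \<noteq> {} \<and>
        (closure V \<times> closure V') \<inter> R = {}))"

lemma nowhere_dense_rel_empty: "nowhere_dense_rel Y {}"
  unfolding nowhere_dense_rel_def by blast

lemma nowhere_dense_rel_Un:
  assumes "nowhere_dense_rel Y R1" "nowhere_dense_rel Y R2"
  shows "nowhere_dense_rel Y (R1 \<union> R2)"
  unfolding nowhere_dense_rel_def
proof (intro allI impI)
  fix W W' :: "'a set" assume W: "open W" "open W'" "W \<inter> Y \<noteq> {}" "W' \<inter> Y \<noteq> {}"
  obtain V1 V1' where V1: "open V1" "open V1'" "V1 \<subseteq> W" "V1' \<subseteq> W'" "V1 \<inter> Y \<noteq> {}"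
      "V1' \<inter> Y \<noteq> {}" "(closure V1 \<times> closure V1') \<inter> R1 = {}"
    using assms(1)[unfolded nowhere_dense_rel_def, rule_format, OF W] by blast
  obtain V2 V2' where V2: "open V2" "open V2'" "V2 \<subseteq> V1" "V2' \<subseteq> V1'" "V2 \<inter> Y \<noteq> {}"
      "V2' \<inter> Y \<noteq> {}" "(closure V2 \<times> closure V2') \<inter> R2 = {}"
    using assms(2)[unfolded nowhere_dense_rel_def, rule_format, OF V1(1,2,5,6)] by blast
  have "closure V2 \<times> closure V2' \<subseteq> closure V1 \<times> closure V1'"
    using closure_mono[OF V2(3)] closure_mono[OF V2(4)] by auto
  then have "(closure V2 \<times> closure V2') \<inter> (R1 \<union> R2) = {}" using V1(7) V2(7) by blast
  moreover have "V2 \<subseteq> W" "V2' \<subseteq> W'" using V1(3,4) V2(3,4) by auto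
  ultimately show "\<exists>V V'. open V \<and> open V' \<and> V \<subseteq> W \<and> V' \<subseteq> W' \<and> V \<inter> Y \<noteq> {} \<and> V' \<inter> Y \<noteq> {} \<and>
      (closure V \<times> closure V') \<inter> (R1 \<union> R2) = {}"
    using V2(1,2,5,6) by blast
qed

lemma nowhere_dense_rel_UN:
  assumes "\<And>k. nowhere_dense_rel Y (R k)"
  shows "nowhere_dense_rel Y (\<Union>k<(n::nat). R k)"
proof (induction n)
  case 0 then show ?case using nowhere_dense_rel_empty by simp
next
  case (Suc n)
  have "(\<Union>k<Suc n. R k) = R n \<union> (\<Union>k<n. R k)" by (auto simp: lessThan_Suc)
  then show ?case using nowhere_dense_rel_Un[OF assms Suc.IH] by simp
qed

lemma nowhere_dense_rel_Id:
  assumes "\<And>y. y \<in> Y \<Longrightarrow> y islimpt Y"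
  shows "nowhere_dense_rel Y Id"
  unfolding nowhere_dense_rel_def
proof (intro allI impI)
  fix W W' :: "'a set" assume W: "open W" "open W'" "W \<inter> Y \<noteq> {}" "W' \<inter> Y \<noteq> {}"
  obtain y where y: "y \<in> W" "y \<in> Y" using W by auto
  obtain y0 where y0: "y0 \<in> W'" "y0 \<in> Y" using W by auto
  obtain y' where y': "y' \<in> W'" "y' \<in> Y" "y' \<noteq> y"
  proof (cases "y0 = y")
    case True
    then have "y islimpt Y" "y \<in> W'" using assms y y0 by auto
    then show ?thesis using W(2) that by (meson islimptE)
  qed (use y0 that in blast)
  define d where "d = dist y y'"
  have d: "d > 0" using y' by (simp add: d_def)
  define V where "V = W \<inter> ball y (d/3)"
  define V' where "V' = W' \<inter> ball y' (d/3)"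
  have cV: "closure V \<subseteq> cball y (d/3)" by (rule closure_minimal) (auto simp: V_def)
  have cV': "closure V' \<subseteq> cball y' (d/3)" by (rule closure_minimal) (auto simp: V'_def)
  have "(closure V \<times> closure V') \<inter> Id = {}"
  proof (rule ccontr)
    assume "(closure V \<times> closure V') \<inter> Id \<noteq> {}"
    then obtain z where "z \<in> closure V" "z \<in> closure V'" by auto
    then have "z \<in> cball y (d/3)" "z \<in> cball y' (d/3)" using cV cV' by auto
    then have "dist y y' \<le> 2*d/3" using dist_triangle[of y y' z] by (auto simp: dist_commute)
    then show False using d d_def by simp
  qed
  moreover have "open V" "open V'" "V \<subseteq> W" "V' \<subseteq> W'" using W(1,2) by (auto simp: V_def V'_def)
  moreover have "V \<inter> Y \<noteq> {}" "V' \<inter> Y \<noteq> {}" using y y' d by (auto simp: V_def V'_def)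
  ultimately show "\<exists>V V'. open V \<and> open V' \<and> V \<subseteq> W \<and> V' \<subseteq> W' \<and> V \<inter> Y \<noteq> {} \<and>
      V' \<inter> Y \<noteq> {} \<and> (closure V \<times> closure V') \<inter> Id = {}"
    by blast
qed

lemma decreasing_compact_nest:
  fixes h :: "nat \<Rightarrow> 'a::metric_space set"
  assumes "\<And>n. compact (h n)" "\<And>n. h n \<noteq> {}" "\<And>n. h (Suc n) \<subseteq> h n"
  shows "(\<Inter>n. h n) \<noteq> {}"
proof -
  have mono: "m \<le> n \<Longrightarrow> h n \<subseteq> h m" for m n
    by (rule lift_Suc_antimono_le[of h]) (use assms(3) in auto)
  have "h 0 \<inter> (\<Inter>i\<in>UNIV. h i) \<noteq> {}"
  proof (rule compact_imp_fip_image)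
    show "compact (h 0)" "closed (h i)" for i using assms(1) compact_imp_closed by auto
    fix I' :: "nat set" assume I': "finite I'" "I' \<subseteq> UNIV"
    have "\<forall>i\<in>insert 0 I'. h (Max (insert 0 I')) \<subseteq> h i"
      using I' by (intro ballI mono Max_ge) auto
    then have "h (Max (insert 0 I')) \<subseteq> h 0 \<inter> (\<Inter>i\<in>I'. h i)" by blast
    then show "h 0 \<inter> (\<Inter>i\<in>I'. h i) \<noteq> {}" using assms(2) by blast
  qed
  then show ?thesis by auto
qed

text \<open>Its limit set (the points lying in a piece of every level) is the union of the
  Cantor sets below each piece.\<close>
locale cantor_scheme =
  fixes E :: "bool list \<Rightarrow> 'a::metric_space set"
  assumes compact_piece: "compact (E s)"
    and nonempty_piece: "E s \<noteq> {}"
    and piece_snoc: "E (s @ [b]) \<subseteq> E s"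
    and piece_diam: "length s = Suc n \<Longrightarrow> x \<in> E s \<Longrightarrow> y \<in> E s \<Longrightarrow> dist x y \<le> (1/2) ^ n"
    and piece_disjoint: "length s = length t \<Longrightarrow> s \<noteq> t \<Longrightarrow> E s \<inter> E t = {}"
begin

lemma piece_take: "E s \<subseteq> E (take k s)"
proof (induction s rule: rev_induct)
  case (snoc b s)
  then show ?case
    using piece_snoc[of s b] by (cases "k \<le> length s") auto
qed simp

definition limit :: "'a set" where
  "limit = (\<Inter>n. \<Union>s\<in>{s. length s = n}. E s)"

lemma finite_level: "finite {s :: bool list. length s = n}"
  using finite_lists_length_eq[of "UNIV :: bool set" n] by simp

lemma limit_level: "x \<in> limit \<Longrightarrow> \<exists>s. length s = n \<and> x \<in> E s"
  unfolding limit_def by blast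

lemma closed_limit: "closed limit"
  unfolding limit_def using finite_level compact_piece
  by (intro closed_INT ballI compact_imp_closed compact_UN) auto

text \<open>Following the branch \<open>s, s False, s False False, \<dots>\<close> shows that every piece
  contains points of the limit set.\<close>
lemma limit_meets_piece: "limit \<inter> E s \<noteq> {}"
proof -
  define h where "h m = E (s @ replicate m False)" for m
  have "(\<Inter>m. h m) \<noteq> {}"
  proof (rule decreasing_compact_nest)
    show "compact (h n)" "h n \<noteq> {}" for n
      using compact_piece nonempty_piece unfolding h_def by auto
    show "h (Suc n) \<subseteq> h n" for n
      using piece_snoc[of "s @ replicate n False" False] unfolding h_def
      by (simp add: replicate_append_same[symmetric])
  qed
  then obtain z where z: "\<And>m. z \<in> h m" by blast
  have "z \<in> limit" unfolding limit_def
  proof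
    fix n
    have "z \<in> E (take n (s @ replicate n False))" using z[of n] piece_take unfolding h_def by blast
    moreover have "length (take n (s @ replicate n False)) = n" by simp
    ultimately show "z \<in> (\<Union>s\<in>{s. length s = n}. E s)" by blast
  qed
  moreover have "z \<in> E s" using z[of 0] by (simp add: h_def)
  ultimately show ?thesis by blast
qed

text \<open>Since pieces shrink, distinct points of the limit set eventually lie in distinct
  pieces of the same level.\<close>
lemma limit_separated:
  assumes "x \<in> limit" "y \<in> limit" "x \<noteq> y"
  shows "\<exists>N. \<forall>n\<ge>N. \<exists>s t. length s = Suc n \<and> length t = Suc n \<and> s \<noteq> t \<and> x \<in> E s \<and> y \<in> E t"
proof -
  obtain N where N: "(1/2::real) ^ N < dist x y"
    using real_arch_pow_inv[of "dist x y" "1/2"] assms(3) by auto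
  have "\<exists>s t. length s = Suc n \<and> length t = Suc n \<and> s \<noteq> t \<and> x \<in> E s \<and> y \<in> E t"
    if "N \<le> n" for n
  proof -
    obtain s t where st: "length s = Suc n" "x \<in> E s" "length t = Suc n" "y \<in> E t"
      using limit_level assms(1,2) by blast
    have le: "(1/2::real) ^ n \<le> (1/2) ^ N" using that by (simp add: power_decreasing)
    have "s \<noteq> t"
    proof
      assume "s = t"
      then have "dist x y \<le> (1/2) ^ n" using piece_diam[of s n x y] st by simp
      then show False using le N by linarith
    qed
    then show ?thesis using st by blast
  qed
  then show ?thesis by blast
qed

lemma limit_perfect:
  assumes x: "x \<in> limit \<inter> E s"
  shows "x islimpt (limit \<inter> E s)"
  unfolding islimpt_approachable
proof (intro allI impI)
  fix \<epsilon> :: real assume "\<epsilon> > 0"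
  then obtain n0 where n0: "(1/2::real) ^ n0 < \<epsilon>"
    using real_arch_pow_inv[of \<epsilon> "1/2"] by auto
  define n where "n = n0 + length s"
  obtain u where u: "length u = Suc (Suc n)" "x \<in> E u" using limit_level x by blast
  then obtain v b where v: "u = v @ [b]" by (cases u rule: rev_cases) auto
  have lv: "length v = Suc n" using u v by simp
  have "x \<in> E (take (length s) u)" using u piece_take by blast
  moreover have "take (length s) u = take (length s) v" using v lv n_def by simp
  ultimately have "take (length s) v = s"
    using piece_disjoint[of "take (length s) v" s] x lv n_def by fastforce
  then have sibling_in_s: "E (v @ [\<not> b]) \<subseteq> E s"
    using piece_snoc[of v "\<not> b"] piece_take[of v "length s"] by auto
  obtain z where z: "z \<in> limit" "z \<in> E (v @ [\<not> b])" using limit_meets_piece by blast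
  have "z \<noteq> x" using piece_disjoint[of "v @ [\<not> b]" u] z u v by auto
  moreover have "dist z x \<le> (1/2) ^ n"
    using piece_diam[OF lv] piece_snoc z u v by blast
  moreover have "(1/2::real) ^ n \<le> (1/2) ^ n0" unfolding n_def by (simp add: power_decreasing)
  ultimately have "dist z x < \<epsilon>" using n0 by linarith
  then show "\<exists>x'\<in>limit \<inter> E s. x' \<noteq> x \<and> dist x' x < \<epsilon>"
    using z sibling_in_s \<open>z \<noteq> x\<close> by blast
qed

text \<open>Two points of a connected subset of the limit set cannot be split between the
  finitely many disjoint closed pieces of a fine level.\<close>
lemma limit_totally_disconnected: "totally_disconnected_set limit"
  unfolding totally_disconnected_set_def
proof (intro allI impI)
  fix Z assume Z: "Z \<subseteq> limit" "connected Z"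
  show "\<exists>a. Z \<subseteq> {a}"
  proof (rule ccontr)
    assume "\<nexists>a. Z \<subseteq> {a}"
    then obtain x y where xy: "x \<in> Z" "y \<in> Z" "x \<noteq> y" by blast
    have "\<exists>N. \<forall>n\<ge>N. \<exists>s t. length s = Suc n \<and> length t = Suc n \<and> s \<noteq> t \<and> x \<in> E s \<and> y \<in> E t"
      by (rule limit_separated) (use xy Z(1) in auto)
    then obtain N where "\<forall>n\<ge>N. \<exists>s t. length s = Suc n \<and> length t = Suc n \<and> s \<noteq> t \<and> x \<in> E s \<and> y \<in> E t" ..
    then obtain s t where st: "length s = Suc N" "length t = Suc N" "s \<noteq> t" "x \<in> E s" "y \<in> E t"
      by blast
    define B where "B = (\<Union>t\<in>{t. length t = Suc N \<and> t \<noteq> s}. E t)"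
    have closed_B: "closed B" unfolding B_def using finite_level[of "Suc N"] compact_piece
      by (intro compact_imp_closed compact_UN) (auto elim: finite_subset[rotated])
    have cover: "Z \<subseteq> E s \<union> B"
    proof
      fix z assume "z \<in> Z"
      then obtain t where "length t = Suc N" "z \<in> E t" using limit_level Z(1) by blast
      then show "z \<in> E s \<union> B" unfolding B_def by (cases "t = s") auto
    qed
    have "E s \<inter> E t = {}" if "length t = Suc N" "t \<noteq> s" for t
      using piece_disjoint[of s t] st(1) that by simp
    then have disjoint: "E s \<inter> B = {}" unfolding B_def by blast
    have "y \<in> B" unfolding B_def using st by blast
    then have "closed (E s) \<and> closed B \<and> Z \<subseteq> E s \<union> B \<and> E s \<inter> B \<inter> Z = {} \<and>
        E s \<inter> Z \<noteq> {} \<and> B \<inter> Z \<noteq> {}"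
      using compact_imp_closed[OF compact_piece] closed_B cover disjoint xy st by blast
    then show False using Z(2) unfolding connected_closed by blast
  qed
qed

lemma cantor_limit_piece: "cantor_set (limit \<inter> E s)"
  unfolding cantor_set_def
proof (intro conjI ballI)
  show "limit \<inter> E s \<noteq> {}" by (rule limit_meets_piece)
  show "compact (limit \<inter> E s)"
    using compact_Int_closed[OF compact_piece closed_limit] by (simp add: Int_commute)
  show "x islimpt limit \<inter> E s" if "x \<in> limit \<inter> E s" for x
    using limit_perfect that .
  show "totally_disconnected_set (limit \<inter> E s)"
    using limit_totally_disconnected unfolding totally_disconnected_set_def by blast
qed

text \<open>The pieces \<open>False\<^sup>j True\<close> are pairwise disjoint, since any two of them
  differ at their shorter length.\<close>
lemma branch_pieces_disjoint:
  assumes "i < j"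
  shows "E (replicate i False @ [True]) \<inter> E (replicate j False @ [True]) = {}"
proof -
  have "take (Suc i) (replicate j False @ [True]) = replicate (Suc i) False"
    using assms by simp
  then have "E (replicate j False @ [True]) \<subseteq> E (replicate (Suc i) False)"
    using piece_take[of "replicate j False @ [True]" "Suc i"] by simp
  moreover have "replicate (Suc i) False \<noteq> replicate i False @ [True]"
    by (metis last_replicate last_snoc nat.distinct(1))
  then have "E (replicate (Suc i) False) \<inter> E (replicate i False @ [True]) = {}"
    by (intro piece_disjoint) auto
  ultimately show ?thesis by blast
qed

end

lemma finite_closed_cover_interior:
  assumes "finite P" "open W" "W \<inter> Y \<noteq> {}" "W \<inter> Y \<subseteq> (\<Union>x\<in>P. A x)" "\<And>x. x \<in> P \<Longrightarrow> closed (A x)"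
  shows "\<exists>x\<in>P. \<exists>V. open V \<and> V \<inter> Y \<noteq> {} \<and> V \<inter> Y \<subseteq> A x"
  using assms
proof (induction P arbitrary: W rule: finite_induct)
  case (insert x P)
  show ?case
  proof (cases "(W - A x) \<inter> Y = {}")
    case True
    then show ?thesis using insert by blast
  next
    case False
    have "open (W - A x)" "(W - A x) \<inter> Y \<subseteq> (\<Union>x\<in>P. A x)" using insert.prems by auto
    then show ?thesis using insert.IH[of "W - A x"] False insert.prems by auto
  qed
qed simp

text \<open>A compact \<open>E \<subseteq> F\<close> is fat if \<open>g(E)\<close> has
  nonempty interior relative to \<open>g(F)\<close>; fat sets are the nodes of the construction.\<close>
locale fusion_setting =
  fixes F :: "'a::metric_space set" and g :: "'a \<Rightarrow> 'b::metric_space"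
  assumes compact_F: "compact F" and continuous_g: "continuous_on F g"
    and perfect_image: "\<And>y. y \<in> g ` F \<Longrightarrow> y islimpt g ` F" and F_nonempty: "F \<noteq> {}"
begin

definition fat :: "'a set \<Rightarrow> bool" where
  "fat E \<longleftrightarrow> compact E \<and> E \<subseteq> F \<and> (\<exists>V. open V \<and> V \<inter> g ` F \<noteq> {} \<and> V \<inter> g ` F \<subseteq> g ` E)"

lemma fat_nonempty: "fat E \<Longrightarrow> E \<noteq> {}"
  unfolding fat_def by auto

lemma fat_whole: "fat F"
  unfolding fat_def using compact_F F_nonempty by (intro conjI exI[of _ UNIV]) auto

text \<open>Every fat set has fat subsets of arbitrarily small diameter: cover it by finitely
  many small balls and apply \<open>finite_closed_cover_interior\<close> to the images.\<close>
lemma fat_small_subset: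
  assumes "fat E" "\<epsilon> > 0"
  obtains E' where "E' \<subseteq> E" "fat E'" "\<And>x y. x \<in> E' \<Longrightarrow> y \<in> E' \<Longrightarrow> dist x y \<le> \<epsilon>"
proof -
  from assms(1) have cE: "compact E" and EF: "E \<subseteq> F"
    and "\<exists>W. open W \<and> W \<inter> g ` F \<noteq> {} \<and> W \<inter> g ` F \<subseteq> g ` E"
    unfolding fat_def by auto
  then obtain W where W: "open W" "W \<inter> g ` F \<noteq> {}" "W \<inter> g ` F \<subseteq> g ` E" by blast
  obtain k where k: "finite k" "k \<subseteq> E" "E \<subseteq> (\<Union>x\<in>k. ball x (\<epsilon>/2))"
    using seq_compact_imp_totally_bounded[OF compact_imp_seq_compact[OF cE]] assms(2)
    by (meson half_gt_zero)
  define A where "A x = g ` (E \<inter> cball x (\<epsilon>/2))" for x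
  have "continuous_on (E \<inter> cball x (\<epsilon>/2)) g" for x
    using continuous_on_subset[OF continuous_g] EF by blast
  then have "closed (A x)" for x
    unfolding A_def using cE by (intro compact_imp_closed compact_continuous_image) auto
  moreover have "W \<inter> g ` F \<subseteq> (\<Union>x\<in>k. A x)"
  proof
    fix y assume "y \<in> W \<inter> g ` F"
    then obtain e where e: "e \<in> E" "y = g e" using W(3) by auto
    then obtain x where "x \<in> k" "e \<in> E \<inter> cball x (\<epsilon>/2)" using k(3) by fastforce
    then show "y \<in> (\<Union>x\<in>k. A x)" unfolding A_def using e by blast
  qed
  ultimately obtain x V where xV: "x \<in> k" "open V" "V \<inter> g ` F \<noteq> {}" "V \<inter> g ` F \<subseteq> A x"
    using finite_closed_cover_interior[OF k(1) W(1,2)] by meson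
  define E' where "E' = E \<inter> cball x (\<epsilon>/2)"
  have "fat E'" unfolding fat_def E'_def
    using xV cE EF by (intro conjI exI[of _ V]) (auto simp: A_def)
  moreover have "dist a b \<le> \<epsilon>" if "a \<in> E'" "b \<in> E'" for a b
    using that dist_triangle[of a b x] by (simp add: E'_def dist_commute)
  moreover have "E' \<subseteq> E" by (simp add: E'_def)
  ultimately show ?thesis using that by blast
qed

lemma fat_restrict:
  assumes "fat E" "open V" "V \<inter> g ` F \<noteq> {}" "V \<inter> g ` F \<subseteq> g ` E"
  shows "fat (E \<inter> g -` closure V)" "g ` (E \<inter> g -` closure V) \<subseteq> closure V"
proof -
  have cE: "compact E" "E \<subseteq> F" using assms(1) unfolding fat_def by auto
  then have "continuous_on E g" using continuous_g continuous_on_subset by blast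
  then have "compact (E \<inter> g -` closure V)"
    using closedin_compact[OF cE(1) continuous_closedin_preimage] by blast
  moreover have "V \<inter> g ` F \<subseteq> g ` (E \<inter> g -` closure V)"
  proof
    fix y assume y: "y \<in> V \<inter> g ` F"
    then obtain e where "e \<in> E" "y = g e" using assms(4) by blast
    then show "y \<in> g ` (E \<inter> g -` closure V)" using y closure_subset by blast
  qed
  ultimately show "fat (E \<inter> g -` closure V)"
    using assms(2,3) cE unfolding fat_def by (intro conjI exI[of _ V]) auto
  show "g ` (E \<inter> g -` closure V) \<subseteq> closure V" by blast
qed

lemma fat_separate_pair:
  assumes "fat E1" "fat E2" "nowhere_dense_rel (g ` F) R"
  obtains E1' E2' where "E1' \<subseteq> E1" "E2' \<subseteq> E2" "fat E1'" "fat E2'"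
    "(g ` E1' \<times> g ` E2') \<inter> R = {}"
proof -
  obtain W1 where W1: "open W1" "W1 \<inter> g ` F \<noteq> {}" "W1 \<inter> g ` F \<subseteq> g ` E1"
    using assms(1) unfolding fat_def by auto
  obtain W2 where W2: "open W2" "W2 \<inter> g ` F \<noteq> {}" "W2 \<inter> g ` F \<subseteq> g ` E2"
    using assms(2) unfolding fat_def by auto
  obtain V1 V2 where V: "open V1" "open V2" "V1 \<subseteq> W1" "V2 \<subseteq> W2" "V1 \<inter> g ` F \<noteq> {}"
      "V2 \<inter> g ` F \<noteq> {}" "(closure V1 \<times> closure V2) \<inter> R = {}"
    using assms(3)[unfolded nowhere_dense_rel_def, rule_format, OF W1(1) W2(1) W1(2) W2(2)]
    by blast
  have "V1 \<inter> g ` F \<subseteq> g ` E1" "V2 \<inter> g ` F \<subseteq> g ` E2" using V(3,4) W1(3) W2(3) by auto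
  then have "fat (E1 \<inter> g -` closure V1)" "g ` (E1 \<inter> g -` closure V1) \<subseteq> closure V1"
    "fat (E2 \<inter> g -` closure V2)" "g ` (E2 \<inter> g -` closure V2) \<subseteq> closure V2"
    using fat_restrict assms(1,2) V(1,2,5,6) by blast+
  moreover have "E1 \<inter> g -` closure V1 \<subseteq> E1" "E2 \<inter> g -` closure V2 \<subseteq> E2" by auto
  ultimately show ?thesis
    using that[of "E1 \<inter> g -` closure V1" "E2 \<inter> g -` closure V2"] V(7) by blast
qed

lemma fat_separate_family:
  assumes "finite P" "\<And>i j. (i, j) \<in> P \<Longrightarrow> i \<noteq> j \<and> i \<in> I \<and> j \<in> I"
    "\<And>i. i \<in> I \<Longrightarrow> fat (E i)" "nowhere_dense_rel (g ` F) R"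
  shows "\<exists>E'. (\<forall>i\<in>I. E' i \<subseteq> E i \<and> fat (E' i)) \<and> (\<forall>(i, j)\<in>P. (g ` E' i \<times> g ` E' j) \<inter> R = {})"
  using assms(1,2)
proof (induction P rule: finite_induct)
  case empty then show ?case using assms(3) by (intro exI[of _ E]) auto
next
  case (insert p P)
  obtain i j where p: "p = (i, j)" by fastforce
  have ij: "i \<noteq> j" "i \<in> I" "j \<in> I" using insert.prems p by auto
  obtain E' where E': "\<forall>i\<in>I. E' i \<subseteq> E i \<and> fat (E' i)"
      "\<forall>(i, j)\<in>P. (g ` E' i \<times> g ` E' j) \<inter> R = {}"
    using insert.IH insert.prems by blast
  obtain E1 E2 where E12: "E1 \<subseteq> E' i" "E2 \<subseteq> E' j" "fat E1" "fat E2"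
      "(g ` E1 \<times> g ` E2) \<inter> R = {}"
    using fat_separate_pair[of "E' i" "E' j" R] E' ij assms(4) by blast
  define E'' where "E'' = E'(i := E1, j := E2)"
  have sub: "E'' k \<subseteq> E' k" for k using E12 by (auto simp: E''_def)
  have "E'' k \<subseteq> E k" if "k \<in> I" for k using sub[of k] E'(1) that by blast
  moreover have "fat (E'' k)" if "k \<in> I" for k using E'(1) that E12(3,4) by (auto simp: E''_def)
  moreover have "(g ` E'' a \<times> g ` E'' b) \<inter> R = {}" if "(a, b) \<in> P" for a b
    using E'(2) that sub[of a] sub[of b] by blast
  moreover have "(g ` E'' i \<times> g ` E'' j) \<inter> R = {}" using E12 ij by (simp add: E''_def)
  ultimately have "(\<forall>k\<in>I. E'' k \<subseteq> E k \<and> fat (E'' k)) \<and>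
      (\<forall>(a, b)\<in>insert (i, j) P. (g ` E'' a \<times> g ` E'' b) \<inter> R = {})"
    by blast
  then show ?case using p by blast
qed

lemma fat_refine_level:
  fixes A :: "bool list \<Rightarrow> 'a set"
  assumes "\<forall>s. length s = n \<longrightarrow> fat (A s)" "nowhere_dense_rel (g ` F) R" "\<epsilon> > 0"
  shows "\<exists>B. (\<forall>s. length s = Suc n \<longrightarrow> B s \<subseteq> A (butlast s) \<and> fat (B s) \<and>
              (\<forall>x\<in>B s. \<forall>y\<in>B s. dist x y \<le> \<epsilon>)) \<and>
            (\<forall>s t. length s = Suc n \<longrightarrow> length t = Suc n \<longrightarrow> s \<noteq> t \<longrightarrow>
              (g ` B s \<times> g ` B t) \<inter> R = {})"
proof -
  have "\<exists>E'. length s = Suc n \<longrightarrow> E' \<subseteq> A (butlast s) \<and> fat E' \<and> (\<forall>x\<in>E'. \<forall>y\<in>E'. dist x y \<le> \<epsilon>)"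
    for s
  proof (cases "length s = Suc n")
    case True
    then have "fat (A (butlast s))" using assms(1) by simp
    then show ?thesis by (rule fat_small_subset[OF _ assms(3)]) blast
  qed simp
  then obtain B0 where B0: "\<And>s. length s = Suc n \<Longrightarrow>
      B0 s \<subseteq> A (butlast s) \<and> fat (B0 s) \<and> (\<forall>x\<in>B0 s. \<forall>y\<in>B0 s. dist x y \<le> \<epsilon>)"
    by metis
  define I where "I = {s :: bool list. length s = Suc n}"
  have "finite I" using finite_lists_length_eq[of "UNIV :: bool set" "Suc n"] by (simp add: I_def)
  define P where "P = {(s, t). s \<in> I \<and> t \<in> I \<and> s \<noteq> t}"
  have "finite P" by (rule finite_subset[of _ "I \<times> I"]) (use \<open>finite I\<close> in \<open>auto simp: P_def\<close>)
  then obtain E' where E': "\<forall>i\<in>I. E' i \<subseteq> B0 i \<and> fat (E' i)"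
      "\<forall>(i, j)\<in>P. (g ` E' i \<times> g ` E' j) \<inter> R = {}"
    using fat_separate_family[OF \<open>finite P\<close> _ _ assms(2), of I B0] B0
    by (auto simp: P_def I_def)
  show ?thesis
  proof (intro exI[of _ E'] conjI allI impI)
    fix s :: "bool list" assume s: "length s = Suc n"
    then have "E' s \<subseteq> B0 s" "fat (E' s)" using E'(1) by (auto simp: I_def)
    then show "E' s \<subseteq> A (butlast s)" "fat (E' s)" "\<forall>x\<in>E' s. \<forall>y\<in>E' s. dist x y \<le> \<epsilon>"
      using B0[OF s] by blast+
  next
    fix s t :: "bool list" assume "length s = Suc n" "length t = Suc n" "s \<noteq> t"
    then show "(g ` E' s \<times> g ` E' t) \<inter> R = {}" using E'(2) by (auto simp: P_def I_def)
  qed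
qed

definition fat_scheme :: "(nat \<Rightarrow> ('b \<times> 'b) set) \<Rightarrow> (bool list \<Rightarrow> 'a set) \<Rightarrow> bool" where
  "fat_scheme Q E \<longleftrightarrow> (\<forall>s. fat (E s)) \<and> (\<forall>s b. E (s @ [b]) \<subseteq> E s) \<and>
     (\<forall>s n x y. length s = Suc n \<longrightarrow> x \<in> E s \<longrightarrow> y \<in> E s \<longrightarrow> dist x y \<le> (1/2) ^ n) \<and>
     (\<forall>s t n. length s = Suc n \<longrightarrow> length t = Suc n \<longrightarrow> s \<noteq> t \<longrightarrow>
        (g ` E s \<times> g ` E t) \<inter> Q n = {})"

lemma fat_schemeD:
  assumes "fat_scheme Q E"
  shows "fat (E s)" "E (s @ [b]) \<subseteq> E s"
    "length s = Suc n \<Longrightarrow> x \<in> E s \<Longrightarrow> y \<in> E s \<Longrightarrow> dist x y \<le> (1/2) ^ n"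
    "length s = Suc n \<Longrightarrow> length t = Suc n \<Longrightarrow> s \<noteq> t \<Longrightarrow> (g ` E s \<times> g ` E t) \<inter> Q n = {}"
  using assms by (simp_all add: fat_scheme_def)

lemma fat_scheme_exists:
  assumes "\<And>n. nowhere_dense_rel (g ` F) (Q n)"
  shows "\<exists>E. fat_scheme Q E"
proof -
  define P where "P n A B \<longleftrightarrow> (\<forall>s. length s = Suc n \<longrightarrow> B s \<subseteq> A (butlast s) \<and> fat (B s) \<and>
      (\<forall>x\<in>B s. \<forall>y\<in>B s. dist x y \<le> (1/2::real) ^ n)) \<and>
      (\<forall>s t. length s = Suc n \<longrightarrow> length t = Suc n \<longrightarrow> s \<noteq> t \<longrightarrow> (g ` B s \<times> g ` B t) \<inter> Q n = {})"
    for n and A B :: "bool list \<Rightarrow> 'a set"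
  have refine: "P n A (SOME B. P n A B)" if "\<forall>s. length s = n \<longrightarrow> fat (A s)" for n A
  proof -
    have "\<exists>B. P n A B" unfolding P_def by (rule fat_refine_level[OF that assms]) simp
    then show ?thesis by (rule someI_ex)
  qed
  define level where "level = rec_nat (\<lambda>s :: bool list. F) (\<lambda>n A. SOME B. P n A B)"
  have level_Suc: "level (Suc n) = (SOME B. P n (level n) B)" for n
    by (simp add: level_def)
  have level_fat: "\<forall>s. length s = n \<longrightarrow> fat (level n s)" for n
  proof (induction n)
    case 0 then show ?case using fat_whole by (simp add: level_def)
  next
    case (Suc n)
    then show ?case using refine[OF Suc] unfolding level_Suc P_def by blast
  qed
  have level_step: "P n (level n) (level (Suc n))" for n
    using refine[OF level_fat] unfolding level_Suc .
  define E where "E s = level (length s) s" for s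
  have "E (s @ [b]) \<subseteq> E s" for s b
    using level_step[of "length s", unfolded P_def, THEN conjunct1, rule_format, of "s @ [b]"]
    by (simp add: E_def)
  moreover have "\<forall>s. fat (E s)" using level_fat unfolding E_def by blast
  moreover have "dist x y \<le> (1/2) ^ n" if "length s = Suc n" "x \<in> E s" "y \<in> E s" for s n x y
    using level_step[of n] that unfolding P_def E_def by auto
  moreover have "(g ` E s \<times> g ` E t) \<inter> Q n = {}"
    if "length s = Suc n" "length t = Suc n" "s \<noteq> t" for s t n
    using level_step[of n] that unfolding P_def E_def by auto
  ultimately show ?thesis unfolding fat_scheme_def by blast
qed

text \<open>The
  Cantor sets are the limit points below the pieces \<open>False\<^sup>j True\<close> of the
  scheme obtained with \<open>Q n = Id \<union> R 0 \<union> \<dots> \<union> R (n - 1)\<close>.\<close>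
theorem fusion:
  fixes R :: "nat \<Rightarrow> ('b \<times> 'b) set"
  assumes R: "\<And>k. nowhere_dense_rel (g ` F) (R k)"
  obtains Cs :: "nat \<Rightarrow> 'a set" where "\<And>j. cantor_set (Cs j)" "\<And>j. Cs j \<subseteq> F"
    "\<And>i j. i \<noteq> j \<Longrightarrow> Cs i \<inter> Cs j = {}"
    "\<And>x y. x \<in> \<Union>(range Cs) \<Longrightarrow> y \<in> \<Union>(range Cs) \<Longrightarrow> x \<noteq> y \<Longrightarrow>
       g x \<noteq> g y \<and> (\<forall>k. (g x, g y) \<notin> R k)"
proof -
  define Q where "Q n = Id \<union> (\<Union>k<n. R k)" for n
  have Q_nowhere_dense: "nowhere_dense_rel (g ` F) (Q n)" for n
    unfolding Q_def by (intro nowhere_dense_rel_Un nowhere_dense_rel_Id nowhere_dense_rel_UN R perfect_image)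
  obtain E where "fat_scheme Q E" using fat_scheme_exists[of Q, OF Q_nowhere_dense] ..
  note E = fat_schemeD[OF this]
  have E_disjoint: "E s \<inter> E t = {}" if "length s = length t" "s \<noteq> t" for s t
  proof (cases "length s")
    case (Suc n)
    then show ?thesis using E(4)[of s n t] that by (auto simp: Q_def)
  qed (use that in simp)
  interpret cantor_scheme E
    using E(1) fat_nonempty E(2) E(3) E_disjoint by unfold_locales (auto simp: fat_def)
  define Cs where "Cs j = limit \<inter> E (replicate j False @ [True])" for j
  have separated: "g x \<noteq> g y \<and> (g x, g y) \<notin> R k"
    if "x \<in> limit" "y \<in> limit" "x \<noteq> y" for x y k
  proof -
    have "\<exists>N. \<forall>n\<ge>N. \<exists>s t. length s = Suc n \<and> length t = Suc n \<and> s \<noteq> t \<and> x \<in> E s \<and> y \<in> E t"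
      by (rule limit_separated[OF that])
    then obtain N where "\<forall>n\<ge>N. \<exists>s t. length s = Suc n \<and> length t = Suc n \<and> s \<noteq> t \<and> x \<in> E s \<and> y \<in> E t" ..
    then obtain s t where st: "length s = Suc (N + Suc k)" "length t = Suc (N + Suc k)" "s \<noteq> t"
      "x \<in> E s" "y \<in> E t"
      using le_add1[of N "Suc k"] by blast
    have "Id \<union> R k \<subseteq> Q (N + Suc k)" by (auto simp: Q_def)
    then show ?thesis using E(4)[OF st(1-3)] st(4,5) by blast
  qed
  show ?thesis
  proof (rule that)
    show "cantor_set (Cs j)" for j unfolding Cs_def by (rule cantor_limit_piece)
    show "Cs j \<subseteq> F" for j using E(1) unfolding Cs_def fat_def by blast
    show "Cs i \<inter> Cs j = {}" if "i \<noteq> j" for i j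
      using that branch_pieces_disjoint[of i j] branch_pieces_disjoint[of j i]
      unfolding Cs_def by (cases "i < j") auto
    show "g x \<noteq> g y \<and> (\<forall>k. (g x, g y) \<notin> R k)"
      if "x \<in> \<Union>(range Cs)" "y \<in> \<Union>(range Cs)" "x \<noteq> y" for x y
      using separated that unfolding Cs_def by blast
  qed
qed

end

text \<open>On a Cantor set the graph of a continuous map is nowhere dense: near any point of
  \<open>K\<close> there is a point \<open>a\<close> different from \<open>h b\<close>, and continuity of \<open>h\<close> at \<open>b\<close> keeps
  small neighbourhoods of \<open>a\<close> and \<open>b\<close> off the graph.\<close>
lemma nowhere_dense_rel_graph:
  assumes K: "cantor_set K" and h: "continuous_on K h"
  shows "nowhere_dense_rel K {(a, b). a \<in> K \<and> b \<in> K \<and> a = h b}"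
  unfolding nowhere_dense_rel_def
proof (intro allI impI)
  fix W W' :: "'a set" assume W: "open W" "open W'" "W \<inter> K \<noteq> {}" "W' \<inter> K \<noteq> {}"
  obtain b where b: "b \<in> W'" "b \<in> K" using W by auto
  obtain a1 a2 where "a1 \<in> W \<inter> K" "a2 \<in> W \<inter> K" "a1 \<noteq> a2"
    using cantor_set_two_points[OF K W(1) W(3)] by blast
  then obtain a where a: "a \<in> W" "a \<in> K" "a \<noteq> h b" by blast
  define d where "d = dist a (h b)"
  have d: "d > 0" using a by (simp add: d_def)
  obtain \<delta> where \<delta>: "\<delta> > 0" "\<forall>z\<in>K. dist z b < \<delta> \<longrightarrow> dist (h z) (h b) < d/3"
    using h b d unfolding continuous_on_iff by (metis divide_pos_pos zero_less_numeral)
  define V where "V = W \<inter> ball a (d/3)"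
  define V' where "V' = W' \<inter> ball b (\<delta>/2)"
  have cV: "closure V \<subseteq> cball a (d/3)" by (rule closure_minimal) (auto simp: V_def)
  have cV': "closure V' \<subseteq> cball b (\<delta>/2)" by (rule closure_minimal) (auto simp: V'_def)
  have "(closure V \<times> closure V') \<inter> {(a, b). a \<in> K \<and> b \<in> K \<and> a = h b} = {}"
  proof (rule ccontr)
    assume "(closure V \<times> closure V') \<inter> {(a, b). a \<in> K \<and> b \<in> K \<and> a = h b} \<noteq> {}"
    then obtain z where z: "h z \<in> closure V" "z \<in> closure V'" "z \<in> K" by auto
    then have "dist a (h z) \<le> d/3" "dist z b < \<delta>" using cV cV' \<delta>(1) by (auto simp: dist_commute)
    moreover have "dist (h z) (h b) < d/3" using \<delta>(2) z(3) calculation(2) by blast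
    ultimately have "dist a (h b) < 2*d/3" using dist_triangle[of a "h b" "h z"] by linarith
    then show False using d_def d by simp
  qed
  moreover have "a \<in> V" "b \<in> V'" using a b d \<delta> by (auto simp: V_def V'_def)
  ultimately show "\<exists>V V'. open V \<and> open V' \<and> V \<subseteq> W \<and> V' \<subseteq> W' \<and> V \<inter> K \<noteq> {} \<and> V' \<inter> K \<noteq> {} \<and>
      (closure V \<times> closure V') \<inter> {(a, b). a \<in> K \<and> b \<in> K \<and> a = h b} = {}"
    using W a b by (intro exI[of _ V] exI[of _ V']) (auto simp: V_def V'_def)
qed

lemma nowhere_dense_rel_fixed_points:
  assumes K: "cantor_set K" and h: "continuous_on K h"
    and unique: "\<And>a b. a \<in> K \<Longrightarrow> b \<in> K \<Longrightarrow> h a = a \<Longrightarrow> h b = b \<Longrightarrow> a = b"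
  shows "nowhere_dense_rel K {(a, b). a \<in> K \<and> b \<in> K \<and> h a = a}"
  unfolding nowhere_dense_rel_def
proof (intro allI impI)
  fix W W' :: "'a set" assume W: "open W" "open W'" "W \<inter> K \<noteq> {}" "W' \<inter> K \<noteq> {}"
  obtain a1 a2 where a12: "a1 \<in> W \<inter> K" "a2 \<in> W \<inter> K" "a1 \<noteq> a2"
    using cantor_set_two_points[OF K W(1) W(3)] by blast
  obtain a where a: "a \<in> W" "a \<in> K" "h a \<noteq> a" using a12 unique by blast
  define d where "d = dist (h a) a"
  have d: "d > 0" using a by (simp add: d_def)
  obtain \<delta> where \<delta>: "\<delta> > 0" "\<forall>z\<in>K. dist z a < \<delta> \<longrightarrow> dist (h z) (h a) < d/3"
    using h a d unfolding continuous_on_iff by (metis divide_pos_pos zero_less_numeral)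
  define r where "r = min \<delta> (d/3) / 2"
  have r: "r > 0" "r < \<delta>" "r \<le> d/3" using \<delta> d by (auto simp: r_def)
  define V where "V = W \<inter> ball a r"
  have cV: "closure V \<subseteq> cball a r" by (rule closure_minimal) (auto simp: V_def)
  have "(closure V \<times> closure W') \<inter> {(a, b). a \<in> K \<and> b \<in> K \<and> h a = a} = {}"
  proof (rule ccontr)
    assume "(closure V \<times> closure W') \<inter> {(a, b). a \<in> K \<and> b \<in> K \<and> h a = a} \<noteq> {}"
    then obtain u where u: "u \<in> closure V" "u \<in> K" "h u = u" by auto
    then have "dist a u \<le> r" using cV by auto
    then have "dist u a < \<delta>" using r by (simp add: dist_commute)
    then have "dist (h u) (h a) < d/3" using \<delta>(2) u(2) by blast
    then have "dist (h a) a < 2*d/3"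
      using dist_triangle[of "h a" a u] \<open>dist a u \<le> r\<close> r u(3) by (simp add: dist_commute)
    then show False using d_def d by simp
  qed
  moreover have "a \<in> V" using a r by (auto simp: V_def)
  ultimately show "\<exists>V V'. open V \<and> open V' \<and> V \<subseteq> W \<and> V' \<subseteq> W' \<and> V \<inter> K \<noteq> {} \<and> V' \<inter> K \<noteq> {} \<and>
      (closure V \<times> closure V') \<inter> {(a, b). a \<in> K \<and> b \<in> K \<and> h a = a} = {}"
    using W a by (intro exI[of _ V] exI[of _ W']) (auto simp: V_def)
qed

text \<open>This is the fusion theorem applied to
  the graphs and the fixed-point relations of all iterates.\<close>
lemma orbit_free_cantor_family:
  fixes f :: "'a::metric_space \<Rightarrow> 'a"
  assumes K: "cantor_set K" and cont: "\<And>k. continuous_on K (f ^^ k)"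
    and unique: "\<And>k a b. k \<ge> 1 \<Longrightarrow> a \<in> K \<Longrightarrow> b \<in> K \<Longrightarrow> (f ^^ k) a = a \<Longrightarrow> (f ^^ k) b = b \<Longrightarrow> a = b"
  obtains Ks :: "nat \<Rightarrow> 'a set" where "\<And>j. cantor_set (Ks j)" "\<And>j. Ks j \<subseteq> K"
    "\<And>i j. i \<noteq> j \<Longrightarrow> Ks i \<inter> Ks j = {}"
    "\<And>a a' k. a \<in> \<Union>(range Ks) \<Longrightarrow> a' \<in> \<Union>(range Ks) \<Longrightarrow> k \<ge> 1 \<Longrightarrow> a \<noteq> (f ^^ k) a'"
proof -
  define R where "R j = {(a, b). a \<in> K \<and> b \<in> K \<and> a = (f ^^ Suc j) b} \<union>
    {(a, b). a \<in> K \<and> b \<in> K \<and> (f ^^ Suc j) a = a}" for j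
  have "nowhere_dense_rel K (R j)" for j
  proof -
    have "nowhere_dense_rel K {(a, b). a \<in> K \<and> b \<in> K \<and> (f ^^ Suc j) a = a}"
      by (rule nowhere_dense_rel_fixed_points[OF K cont]) (use unique[of "Suc j"] in auto)
    then show ?thesis
      unfolding R_def by (intro nowhere_dense_rel_Un nowhere_dense_rel_graph[OF K cont])
  qed
  then have R_nowhere_dense: "nowhere_dense_rel (id ` K) (R j)" for j by simp
  interpret fusion_setting K id
    using K by unfold_locales (auto simp: cantor_set_def)
  obtain Ks :: "nat \<Rightarrow> 'a set" where Ks: "\<And>j. cantor_set (Ks j)" "\<And>j. Ks j \<subseteq> K"
      "\<And>i j. i \<noteq> j \<Longrightarrow> Ks i \<inter> Ks j = {}"
      "\<And>x y. x \<in> \<Union>(range Ks) \<Longrightarrow> y \<in> \<Union>(range Ks) \<Longrightarrow> x \<noteq> y \<Longrightarrow>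
         id x \<noteq> id y \<and> (\<forall>j. (id x, id y) \<notin> R j)"
    using fusion[of R, OF R_nowhere_dense] by blast
  have orbit_free: "a \<noteq> (f ^^ k) a'"
    if a: "a \<in> \<Union>(range Ks)" "a' \<in> \<Union>(range Ks)" and k: "k \<ge> 1" for a a' k
  proof
    assume eq: "a = (f ^^ k) a'"
    obtain j where j: "k = Suc j" using k by (cases k) auto
    have aK: "a \<in> K" "a' \<in> K" using a Ks(2) by auto
    show False
    proof (cases "a = a'")
      case False
      then have "(a, a') \<notin> R j" using Ks(4)[OF a False] by simp
      then show False using aK eq j by (simp add: R_def)
    next
      case True
      obtain i where i: "a \<in> Ks i" using a by auto
      have "a islimpt Ks i" using i Ks(1)[of i] unfolding cantor_set_def by blast
      then obtain b where b: "b \<in> Ks i" "b \<noteq> a" by (meson UNIV_I islimptE open_UNIV)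
      then have "(a, b) \<notin> R j" using Ks(4)[of a b] a(1) by auto
      moreover have "(a, b) \<in> R j" using b eq j True aK Ks(2) by (auto simp: R_def)
      ultimately show False by contradiction
    qed
  qed
  show ?thesis by (rule that[OF Ks(1-3) orbit_free])
qed

text \<open>A Cantor set inside the image of a compact set under a continuous map lifts to a
  Cantor set on which the map is injective: apply the fusion theorem to the preimage,
  with no relations to avoid.\<close>
lemma cantor_set_lift:
  assumes B: "compact B" "continuous_on B g" and L: "cantor_set L" "L \<subseteq> g ` B"
  obtains C where "cantor_set C" "C \<subseteq> B" "inj_on g C" "g ` C \<subseteq> L"
proof -
  define F where "F = B \<inter> g -` L"
  have "compact F"
    unfolding F_def using L(1) B
    by (intro closedin_compact[OF B(1)] continuous_closedin_preimage compact_imp_closed)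
      (auto simp: cantor_set_def)
  moreover have "g ` F = L" using L(2) by (auto simp: F_def)
  moreover have "continuous_on F g" using continuous_on_subset[OF B(2)] by (simp add: F_def)
  ultimately interpret fusion_setting F g
    using L(1) by unfold_locales (auto simp: cantor_set_def)
  obtain Cs :: "nat \<Rightarrow> 'a set" where Cs: "\<And>j. cantor_set (Cs j)" "\<And>j. Cs j \<subseteq> F"
      "\<And>i j. i \<noteq> j \<Longrightarrow> Cs i \<inter> Cs j = {}"
      "\<And>x y. x \<in> \<Union>(range Cs) \<Longrightarrow> y \<in> \<Union>(range Cs) \<Longrightarrow> x \<noteq> y \<Longrightarrow>
         g x \<noteq> g y \<and> (\<forall>k::nat. (g x, g y) \<notin> {})"
    using fusion[of "\<lambda>_. {}", OF nowhere_dense_rel_empty] by blast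
  have "inj_on g (Cs 0)" by (rule inj_onI) (use Cs(4) in blast)
  moreover have "Cs 0 \<subseteq> B" "g ` Cs 0 \<subseteq> L" using Cs(2)[of 0] by (auto simp: F_def)
  ultimately show ?thesis using that Cs(1) by blast
qed

lemma compact_countable_ball_base:
  fixes X :: "'a::metric_space set"
  assumes "compact X" "X \<noteq> {}"
  obtains c :: "nat \<Rightarrow> 'a" and r :: "nat \<Rightarrow> real" where "\<And>i. c i \<in> X" "\<And>i. r i > 0"
    "\<And>x e. x \<in> X \<Longrightarrow> e > 0 \<Longrightarrow> \<exists>i. ball (c i) (r i) \<subseteq> ball x e"
proof -
  have "\<forall>n. \<exists>P. finite P \<and> P \<subseteq> X \<and> X \<subseteq> (\<Union>x\<in>P. ball x (1 / real (Suc n)))"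
    using seq_compact_imp_totally_bounded[OF compact_imp_seq_compact[OF assms(1)]] by simp
  then obtain P where P: "\<And>n. finite (P n) \<and> P n \<subseteq> X \<and> X \<subseteq> (\<Union>x\<in>P n. ball x (1 / real (Suc n)))"
    by metis
  define Idx where "Idx = (SIGMA n:UNIV. P n)"
  have "countable Idx" unfolding Idx_def using P countable_finite by (intro countable_SIGMA) auto
  moreover have "Idx \<noteq> {}" using assms(2) P[of 0] by (auto simp: Idx_def)
  ultimately have Idx_range: "range (from_nat_into Idx) = Idx" by simp
  define c where "c i = snd (from_nat_into Idx i)" for i
  define r where "r i = 1 / real (Suc (fst (from_nat_into Idx i)))" for i
  have "c i \<in> X" for i
    using Idx_range P unfolding c_def Idx_def by (metis SigmaE rangeI snd_conv subsetD)
  moreover have "r i > 0" for i by (simp add: r_def)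
  moreover have "\<exists>i. ball (c i) (r i) \<subseteq> ball x e" if x: "x \<in> X" and e: "e > 0" for x e
  proof -
    obtain n where n: "inverse (real (Suc n)) < e/2" using reals_Archimedean[of "e/2"] e by auto
    obtain p where p: "p \<in> P n" "dist p x < 1 / real (Suc n)" using P[of n] x by auto
    then obtain i where i: "from_nat_into Idx i = (n, p)"
      using Idx_range unfolding Idx_def by (metis SigmaI UNIV_I rangeE)
    have "ball (c i) (r i) \<subseteq> ball x e"
    proof
      fix z assume "z \<in> ball (c i) (r i)"
      then have "dist p z < 1 / real (Suc n)" using i by (simp add: c_def r_def)
      then show "z \<in> ball x e" using p(2) n dist_triangle[of x z p]
        by (simp add: dist_commute inverse_eq_divide)
    qed
    then show ?thesis by blast
  qed
  ultimately show ?thesis using that by blast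
qed

lemma dense_if_meets_ball_base:
  assumes "\<And>x e. x \<in> X \<Longrightarrow> e > 0 \<Longrightarrow> \<exists>i. ball (c i) (r i) \<subseteq> ball x e"
    and "\<And>i. T \<inter> ball (c i) (r i) \<noteq> {}"
  shows "X \<subseteq> closure T"
proof (intro subsetI iffD2[OF closure_approachable] allI impI)
  fix x e assume "x \<in> X" "(e::real) > 0"
  then obtain i where "ball (c i) (r i) \<subseteq> ball x e" using assms(1) by blast
  then show "\<exists>y\<in>T. dist y x < e" using assms(2)[of i] by (force simp: dist_commute)
qed

text \<open>Under the hypothesis of the theorem, every ball around a point of \<open>X\<close> contains a
  Cantor set which some iterate maps injectively into the image of a given Cantor set
  \<open>L \<subseteq> K\<close>: it is lifted from \<open>f\<^sup>n(L) \<subseteq> f\<^sup>n(U)\<close>.\<close>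
lemma cantor_shadow_in_ball:
  fixes f :: "'a::metric_space \<Rightarrow> 'a"
  assumes X: "compact X" "continuous_on X f" "f ` X \<subseteq> X"
    and L: "cantor_set L" "L \<subseteq> K" "K \<subseteq> X" "\<And>n. inj_on (f ^^ n) L"
    and hit: "\<And>U. openin (top_of_set X) U \<Longrightarrow> U \<noteq> {} \<Longrightarrow> \<exists>n. (f ^^ n) ` K \<subseteq> (f ^^ n) ` U"
    and x: "x \<in> X" "r > 0"
  shows "\<exists>n C. cantor_set C \<and> C \<subseteq> X \<inter> ball x r \<and> inj_on (f ^^ n) C \<and> (f ^^ n) ` C \<subseteq> (f ^^ n) ` L"
proof -
  define U where "U = X \<inter> ball x (r/2)"
  have "openin (top_of_set X) U" "U \<noteq> {}" using x by (auto simp: U_def)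
  then obtain n where n: "(f ^^ n) ` K \<subseteq> (f ^^ n) ` U" using hit by blast
  define B where "B = X \<inter> cball x (r/2)"
  have "compact B" using compact_Int_closed[OF X(1) closed_cball] by (simp add: B_def)
  moreover have "continuous_on B (f ^^ n)"
    using continuous_on_subset[OF funpow_continuous_on[OF X(2,3)]] by (simp add: B_def)
  moreover have "continuous_on L (f ^^ n)"
    using continuous_on_subset[OF funpow_continuous_on[OF X(2,3)]] L(2,3) by blast
  then have "cantor_set ((f ^^ n) ` L)" using cantor_set_inj_image L(1,4) by blast
  moreover have "U \<subseteq> B" by (auto simp: U_def B_def)
  then have "(f ^^ n) ` L \<subseteq> (f ^^ n) ` B"
    using image_mono[OF L(2), of "f ^^ n"] n image_mono[of U B "f ^^ n"] by blast
  ultimately obtain C where "cantor_set C" "C \<subseteq> B" "inj_on (f ^^ n) C" "(f ^^ n) ` C \<subseteq> (f ^^ n) ` L"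
    using cantor_set_lift by blast
  moreover have "B \<subseteq> X \<inter> ball x r" using x by (auto simp: B_def)
  ultimately show ?thesis by blast
qed

lemma dense_cantor_shadows:
  fixes f :: "'a::metric_space \<Rightarrow> 'a" and Ks :: "nat \<Rightarrow> 'a set"
  assumes X: "compact X" "continuous_on X f" "f ` X \<subseteq> X"
    and Ks: "\<And>i. cantor_set (Ks i)" "\<And>i. Ks i \<subseteq> K" "K \<subseteq> X" "\<And>i n. inj_on (f ^^ n) (Ks i)"
    and hit: "\<And>U. openin (top_of_set X) U \<Longrightarrow> U \<noteq> {} \<Longrightarrow> \<exists>n. (f ^^ n) ` K \<subseteq> (f ^^ n) ` U"
  shows "\<exists>lag CC. (\<forall>i. cantor_set (CC i) \<and> CC i \<subseteq> X \<and> inj_on (f ^^ lag i) (CC i) \<and>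
      (f ^^ lag i) ` CC i \<subseteq> (f ^^ lag i) ` Ks i) \<and> X \<subseteq> closure (\<Union>i. CC i)"
proof -
  have "X \<noteq> {}" using Ks(1)[of 0] Ks(2,3) by (auto simp: cantor_set_def)
  then obtain c :: "nat \<Rightarrow> 'a" and r :: "nat \<Rightarrow> real" where c: "\<And>i. c i \<in> X" "\<And>i. r i > 0"
      "\<And>x e. x \<in> X \<Longrightarrow> e > 0 \<Longrightarrow> \<exists>i. ball (c i) (r i) \<subseteq> ball x e"
    using compact_countable_ball_base[OF X(1)] by blast
  have "\<exists>n C. cantor_set C \<and> C \<subseteq> X \<inter> ball (c i) (r i) \<and> inj_on (f ^^ n) C \<and>
      (f ^^ n) ` C \<subseteq> (f ^^ n) ` Ks i" for i
    using cantor_shadow_in_ball[OF X Ks(1,2,3) Ks(4) hit c(1,2)] .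
  then obtain lag :: "nat \<Rightarrow> nat" and CC :: "nat \<Rightarrow> 'a set"
    where CC: "\<And>i. cantor_set (CC i)" "\<And>i. CC i \<subseteq> X \<inter> ball (c i) (r i)"
      "\<And>i. inj_on (f ^^ lag i) (CC i)" "\<And>i. (f ^^ lag i) ` CC i \<subseteq> (f ^^ lag i) ` Ks i"
    by metis
  have "X \<subseteq> closure (\<Union>i. CC i)"
  proof (rule dense_if_meets_ball_base[OF c(3)])
    fix i
    obtain z where "z \<in> CC i" using CC(1)[of i] unfolding cantor_set_def by blast
    then show "(\<Union>i. CC i) \<inter> ball (c i) (r i) \<noteq> {}" using CC(2)[of i] by blast
  qed
  then show ?thesis using CC by blast
qed

locale scrambled_orbit_family =
  fixes f :: "'a::metric_space \<Rightarrow> 'a" and S :: "'a set"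
    and Ks CC :: "nat \<Rightarrow> 'a set" and lag :: "nat \<Rightarrow> nat"
  assumes scrambled: "synd_scrambled f S" and S_invariant: "f ` S \<subseteq> S"
    and Ks_S: "Ks i \<subseteq> S" and Ks_disjoint: "i \<noteq> j \<Longrightarrow> Ks i \<inter> Ks j = {}"
    and orbit_free: "a \<in> \<Union>(range Ks) \<Longrightarrow> a' \<in> \<Union>(range Ks) \<Longrightarrow> k \<ge> 1 \<Longrightarrow> a \<noteq> (f ^^ k) a'"
    and CC_cantor: "cantor_set (CC i)" and CC_continuous: "continuous_on (CC i) (f ^^ m)"
    and CC_inj: "inj_on (f ^^ lag i) (CC i)"
    and CC_shadow: "(f ^^ lag i) ` CC i \<subseteq> (f ^^ lag i) ` Ks i"
begin

definition orbit_union :: "'a set" where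
  "orbit_union = (\<Union>i. \<Union>m. (f ^^ m) ` CC i)"

lemma CC_subset_orbit_union: "CC i \<subseteq> orbit_union"
proof
  fix z assume "z \<in> CC i"
  then have "z \<in> (f ^^ 0) ` CC i" by simp
  then show "z \<in> orbit_union" unfolding orbit_union_def by blast
qed

lemma iterate_S: "a \<in> S \<Longrightarrow> (f ^^ m) a \<in> S"
  using funpow_image_subset[OF S_invariant] by blast

lemma iterate_inj_S: "a \<in> S \<Longrightarrow> b \<in> S \<Longrightarrow> (f ^^ n) a = (f ^^ n) b \<Longrightarrow> a = b"
  using scrambled_funpow_inj[OF scrambled] by blast

lemma shadow:
  assumes "c \<in> CC i"
  shows "\<exists>a\<in>Ks i. \<forall>n\<ge>lag i. (f ^^ n) c = (f ^^ n) a"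
proof -
  obtain a where a: "a \<in> Ks i" "(f ^^ lag i) c = (f ^^ lag i) a" using CC_shadow assms by blast
  then show ?thesis using funpow_eq_propagate[OF a(2)] by blast
qed

text \<open>Points of the union of the \<open>Ks i\<close> with a common iterate are equal, with equal
  times, because the union is orbit free and iterates are injective on \<open>S\<close>.\<close>
lemma iterates_eq:
  assumes "a \<in> \<Union>(range Ks)" "a' \<in> \<Union>(range Ks)" "(f ^^ m) a = (f ^^ m') a'"
  shows "m = m' \<and> a = a'"
proof -
  have ordered: "m = m' \<and> a = a'"
    if a: "a \<in> \<Union>(range Ks)" "a' \<in> \<Union>(range Ks)" and eq: "(f ^^ m) a = (f ^^ m') a'"
      and le: "m \<le> m'" for a a' m m'
  proof -
    have "(f ^^ m') a' = (f ^^ m) ((f ^^ (m' - m)) a')"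
      using le by (metis le_add_diff_inverse funpow_add comp_apply)
    moreover have "a \<in> S" "a' \<in> S" using a Ks_S by blast+
    ultimately have "a = (f ^^ (m' - m)) a'" using eq iterate_S iterate_inj_S by metis
    then have "m' - m = 0" using orbit_free[OF a] by (metis not_one_le_zero less_one not_less)
    then show ?thesis using le \<open>a = (f ^^ (m' - m)) a'\<close> by simp
  qed
  show ?thesis
    using ordered[OF assms] ordered[OF assms(2,1) assms(3)[symmetric]] by (cases "m \<le> m'") auto
qed

text \<open>Injectivity of \<open>f\<^bsup>lag i\<^esub>\<close> on \<open>CC i\<close> propagates to all iterates, via the shadows.\<close>
lemma funpow_inj_on_CC: "inj_on (f ^^ m) (CC i)"
proof (rule inj_onI)
  fix c c' assume c: "c \<in> CC i" "c' \<in> CC i" "(f ^^ m) c = (f ^^ m) c'"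
  obtain a a' where a: "a \<in> Ks i" "a' \<in> Ks i"
    and orbits: "\<forall>n\<ge>lag i. (f ^^ n) c = (f ^^ n) a" "\<forall>n\<ge>lag i. (f ^^ n) c' = (f ^^ n) a'"
    using shadow c(1,2) by metis
  have "(f ^^ (lag i + m)) c = (f ^^ (lag i + m)) c'" using c(3) by (simp add: funpow_add)
  then have "(f ^^ (lag i + m)) a = (f ^^ (lag i + m)) a'" using orbits by simp
  then have "a = a'" using iterate_inj_S a Ks_S by blast
  then have "(f ^^ lag i) c = (f ^^ lag i) c'" using orbits by simp
  then show "c = c'" using CC_inj c(1,2) by (meson inj_onD)
qed

lemma orbit_union_invariant: "f ` orbit_union \<subseteq> orbit_union"
proof
  fix z assume "z \<in> f ` orbit_union"
  then obtain i m c where "c \<in> CC i" "z = (f ^^ Suc m) c" unfolding orbit_union_def by auto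
  then show "z \<in> orbit_union" unfolding orbit_union_def by blast
qed

lemma orbit_union_mycielski: "mycielski_set orbit_union"
  unfolding mycielski_set_def
proof (intro exI[of _ "(\<lambda>(i, m). (f ^^ m) ` CC i) ` UNIV"] conjI ballI)
  show "countable ((\<lambda>(i, m). (f ^^ m) ` CC i) ` (UNIV :: (nat \<times> nat) set))" by simp
  show "cantor_set C" if "C \<in> (\<lambda>(i, m). (f ^^ m) ` CC i) ` (UNIV :: (nat \<times> nat) set)" for C
    using that cantor_set_inj_image[OF CC_cantor CC_continuous funpow_inj_on_CC] by auto
  show "orbit_union = \<Union>((\<lambda>(i, m). (f ^^ m) ` CC i) ` (UNIV :: (nat \<times> nat) set))"
    unfolding orbit_union_def by auto
qed

lemma orbit_union_shadow_pair:
  assumes "x \<in> orbit_union" "y \<in> orbit_union" "x \<noteq> y"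
  obtains p q N where "p \<in> S" "q \<in> S" "p \<noteq> q"
    "\<forall>n\<ge>N. (f ^^ n) x = (f ^^ n) p" "\<forall>n\<ge>N. (f ^^ n) y = (f ^^ n) q"
proof -
  obtain i m c where x: "c \<in> CC i" "x = (f ^^ m) c" using assms(1) unfolding orbit_union_def by blast
  obtain j m' c' where y: "c' \<in> CC j" "y = (f ^^ m') c'" using assms(2) unfolding orbit_union_def by blast
  obtain a where a: "a \<in> Ks i" "\<forall>n\<ge>lag i. (f ^^ n) c = (f ^^ n) a" using shadow x(1) by blast
  obtain a' where a': "a' \<in> Ks j" "\<forall>n\<ge>lag j. (f ^^ n) c' = (f ^^ n) a'" using shadow y(1) by blast
  define N where "N = max (lag i) (lag j)"
  have "(f ^^ n) x = (f ^^ n) ((f ^^ m) a)" if "n \<ge> N" for n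
    using a(2)[rule_format, of "n + m"] that x(2) by (simp add: N_def funpow_add)
  moreover have "(f ^^ n) y = (f ^^ n) ((f ^^ m') a')" if "n \<ge> N" for n
    using a'(2)[rule_format, of "n + m'"] that y(2) by (simp add: N_def funpow_add)
  moreover have "(f ^^ m) a \<in> S" "(f ^^ m') a' \<in> S" using a(1) a'(1) Ks_S iterate_S by blast+
  moreover have "(f ^^ m) a \<noteq> (f ^^ m') a'"
  proof
    assume "(f ^^ m) a = (f ^^ m') a'"
    then have "m = m'" "a = a'" using iterates_eq a(1) a'(1) by blast+
    then have "i = j" using a(1) a'(1) Ks_disjoint by blast
    then have "(f ^^ lag i) c = (f ^^ lag i) c'" using a(2) a'(2) \<open>a = a'\<close> by simp
    then have "c = c'" using CC_inj x(1) y(1) \<open>i = j\<close> by (meson inj_onD)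
    then show False using assms(3) x(2) y(2) \<open>m = m'\<close> by simp
  qed
  ultimately show ?thesis using that by blast
qed

lemma orbit_union_scrambled: "synd_scrambled f orbit_union"
  unfolding synd_scrambled_def
proof (intro conjI ballI impI)
  obtain b1 b2 where "b1 \<in> UNIV \<inter> CC 0" "b2 \<in> UNIV \<inter> CC 0" "b1 \<noteq> b2"
    using cantor_set_two_points[OF CC_cantor open_UNIV] CC_cantor[of 0]
    unfolding cantor_set_def by blast
  moreover note CC_subset_orbit_union[of 0]
  ultimately show "\<exists>x\<in>orbit_union. \<exists>y\<in>orbit_union. x \<noteq> y" by blast
next
  fix x y assume "x \<in> orbit_union" "y \<in> orbit_union" "x \<noteq> y"
  then obtain p q N where "p \<in> S" "q \<in> S" "p \<noteq> q"
    "\<forall>n\<ge>N. (f ^^ n) x = (f ^^ n) p" "\<forall>n\<ge>N. (f ^^ n) y = (f ^^ n) q"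
    by (rule orbit_union_shadow_pair)
  then show "(x, y) \<in> SProx f - Asy f"
    using eventually_same_orbits(1) scrambled unfolding synd_scrambled_def by blast
qed

lemma orbit_union_eps_scrambled:
  assumes "synd_eps_scrambled f \<epsilon> S"
  shows "synd_eps_scrambled f \<epsilon> orbit_union"
  unfolding synd_eps_scrambled_def
proof (intro conjI orbit_union_scrambled ballI impI)
  fix x y assume "x \<in> orbit_union" "y \<in> orbit_union" "x \<noteq> y"
  then obtain p q N where pq: "p \<in> S" "q \<in> S" "p \<noteq> q"
    and orbits: "\<forall>n\<ge>N. (f ^^ n) x = (f ^^ n) p" "\<forall>n\<ge>N. (f ^^ n) y = (f ^^ n) q"
    by (rule orbit_union_shadow_pair)
  have "(p, q) \<in> SProx f - Asy f" using scrambled pq unfolding synd_scrambled_def by blast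
  then have "limsup (\<lambda>n. ereal (dist ((f ^^ n) x) ((f ^^ n) y)))
      = limsup (\<lambda>n. ereal (dist ((f ^^ n) p) ((f ^^ n) q)))"
    using eventually_same_orbits(2) orbits by blast
  then show "ereal \<epsilon> \<le> limsup (\<lambda>n. ereal (dist ((f ^^ n) x) ((f ^^ n) y)))"
    using assms pq unfolding synd_eps_scrambled_def by metis
qed

end

theorem lemma3p11:
  fixes X :: "'a::metric_space set" and f :: "'a \<Rightarrow> 'a" and S K :: "'a set"
  assumes "compact X" and "continuous_on X f" and "f ` X \<subseteq> X"
    and "S \<subseteq> X" and "synd_scrambled f S" and "f ` S \<subseteq> S"
    and "cantor_set K" and "K \<subseteq> S"
    and "\<And>U. openin (top_of_set X) U \<Longrightarrow> U \<noteq> {} \<Longrightarrow>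
           \<exists>n. (f ^^ n) ` K \<subseteq> (f ^^ n) ` U"
  shows "\<exists>T. T \<subseteq> X \<and> X \<subseteq> closure T \<and> mycielski_set T \<and> f ` T \<subseteq> T \<and>
             synd_scrambled f T \<and>
             (\<forall>\<epsilon>. synd_eps_scrambled f \<epsilon> S \<longrightarrow> synd_eps_scrambled f \<epsilon> T)"
proof -
  have K_X: "K \<subseteq> X" using assms(4,8) by blast
  have cont: "continuous_on A (f ^^ n)" if "A \<subseteq> X" for A n
    using continuous_on_subset[OF funpow_continuous_on[OF assms(2,3)] that] .
  have inj: "inj_on (f ^^ n) A" if "A \<subseteq> K" for A n
    using that assms(8) scrambled_funpow_inj[OF assms(5)] by (meson inj_onI subsetD)
  obtain Ks :: "nat \<Rightarrow> 'a set" where Ks: "\<And>j. cantor_set (Ks j)" "\<And>j. Ks j \<subseteq> K"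
      "\<And>i j. i \<noteq> j \<Longrightarrow> Ks i \<inter> Ks j = {}"
      "\<And>a a' k. a \<in> \<Union>(range Ks) \<Longrightarrow> a' \<in> \<Union>(range Ks) \<Longrightarrow> k \<ge> 1 \<Longrightarrow> a \<noteq> (f ^^ k) a'"
  proof (rule orbit_free_cantor_family[OF assms(7) cont[OF K_X]])
    show "a = b" if "1 \<le> k" "a \<in> K" "b \<in> K" "(f ^^ k) a = a" "(f ^^ k) b = b" for k a b
      using scrambled_common_period_unique[OF assms(5)] that assms(8) by blast
  qed (rule that)
  obtain lag :: "nat \<Rightarrow> nat" and CC :: "nat \<Rightarrow> 'a set"
    where CC: "\<forall>i. cantor_set (CC i) \<and> CC i \<subseteq> X \<and> inj_on (f ^^ lag i) (CC i) \<and>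
      (f ^^ lag i) ` CC i \<subseteq> (f ^^ lag i) ` Ks i" and dense: "X \<subseteq> closure (\<Union>i. CC i)"
    using dense_cantor_shadows[where Ks = Ks, OF assms(1-3) Ks(1,2) K_X inj[OF Ks(2)] assms(9)] by blast
  interpret scrambled_orbit_family f S Ks CC lag
  proof
    show "Ks i \<subseteq> S" for i using Ks(2) assms(8) by blast
    show "continuous_on (CC i) (f ^^ m)" for i m using cont CC by blast
  qed (use assms(5,6) Ks(3,4) CC in auto)
  have "orbit_union \<subseteq> X" unfolding orbit_union_def using CC funpow_image_subset[OF assms(3)] by blast
  moreover have "X \<subseteq> closure orbit_union"
    using dense closure_mono[of "\<Union>i. CC i" orbit_union] CC_subset_orbit_union by blast
  ultimately show ?thesis using orbit_union_mycielski orbit_union_invariant orbit_union_scrambled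
      orbit_union_eps_scrambled by blast
qed

end
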